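(* Let $G=(V,E)$ be a simple connected graph with $N\ge 2$ nodes, and let $\tilde{L}_\tau$ denote either its Mellin transformed $d$-path Laplacian $\tilde{L}_{\mathrm{Mell}}=\sum_{d=1}^{d_{max}} d^{-s}L_d$ (with parameter $s>0$) or its Laplace transformed $d$-path Laplacian $\tilde{L}_{\mathrm{Lapl}}=L+\sum_{d=2}^{d_{max}} e^{-\lambda d}L_d$ (with parameter $\lambda>0$). Then $\lambda_2(\tilde{L}_\tau)/N\to\lambda_2(L)/N$ as $s\to\infty$ (respectively $\lambda\to\infty$), and $\lambda_2(\tilde{L}_\tau)/N\to 1$ as $s\to 0$ (respectively $\lambda\to 0$).
   Context: For a simple connected graph $G=(V,E)$ with $N$ nodes, $d_{ij}$ denotes the shortest-path distance between nodes $i$ and $j$ and $d_{max}$ the diameter. $L$ is the usual graph Laplacian ($L_{ii}=k_i$ the degree, $L_{ij}=-1$ if $(i,j)\in E$, $0$ otherwise). For $1\le d\le d_{max}$, the $d$-path Laplacian $L_d$ is the $N\times N$ matrix with $(L_d)_{ij}=-1$ if $i\neq j$ and $d_{ij}=d$, $(L_d)_{ij}=0$ if $i\ne j$ and $d_{ij}\neq d$, and $(L_d)_{ii}$ equal to the number of nodes $j$ with $d_{ij}=d$; thus $L_1=L$. For such Laplacian-type matrices $M$, $0=\lambda_1(M)\le\lambda_2(M)\le\cdots\le\lambda_N(M)$ denote the eigenvalues in increasing order. *)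

theory Defs
  imports Complex_Main "Jordan_Normal_Form.Char_Poly" "HOL-Library.Multiset"
begin

definition simple_graph :: "nat \<Rightarrow> (nat \<Rightarrow> nat \<Rightarrow> bool) \<Rightarrow> bool" where
  "simple_graph N E \<longleftrightarrow> (\<forall>i j. E i j \<longrightarrow> i < N \<and> j < N) \<and>
     (\<forall>i j. E i j \<longrightarrow> E j i) \<and> (\<forall>i. \<not> E i i)"

definition walk :: "nat \<Rightarrow> (nat \<Rightarrow> nat \<Rightarrow> bool) \<Rightarrow> nat list \<Rightarrow> bool" where
  "walk N E xs \<longleftrightarrow> xs \<noteq> [] \<and> set xs \<subseteq> {..<N} \<and>
     (\<forall>k. Suc k < length xs \<longrightarrow> E (xs ! k) (xs ! Suc k))"

definition connected_graph :: "nat \<Rightarrow> (nat \<Rightarrow> nat \<Rightarrow> bool) \<Rightarrow> bool" where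
  "connected_graph N E \<longleftrightarrow> (\<forall>i<N. \<forall>j<N. \<exists>xs. walk N E xs \<and> hd xs = i \<and> last xs = j)"

text \<open>Shortest-path distance: number of edges of a shortest walk.\<close>
definition gdist :: "nat \<Rightarrow> (nat \<Rightarrow> nat \<Rightarrow> bool) \<Rightarrow> nat \<Rightarrow> nat \<Rightarrow> nat" where
  "gdist N E i j = (LEAST k. \<exists>xs. walk N E xs \<and> hd xs = i \<and> last xs = j \<and> length xs = Suc k)"

definition diameter :: "nat \<Rightarrow> (nat \<Rightarrow> nat \<Rightarrow> bool) \<Rightarrow> nat" where
  "diameter N E = Max {gdist N E i j | i j. i < N \<and> j < N}"

definition degree :: "nat \<Rightarrow> (nat \<Rightarrow> nat \<Rightarrow> bool) \<Rightarrow> nat \<Rightarrow> nat" where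
  "degree N E i = card {j. j < N \<and> E i j}"

definition laplacian :: "nat \<Rightarrow> (nat \<Rightarrow> nat \<Rightarrow> bool) \<Rightarrow> real mat" where
  "laplacian N E = mat N N (\<lambda>(i,j). if i = j then real (degree N E i)
                                     else if E i j then -1 else 0)"

definition path_laplacian :: "nat \<Rightarrow> (nat \<Rightarrow> nat \<Rightarrow> bool) \<Rightarrow> nat \<Rightarrow> real mat" where
  "path_laplacian N E d = mat N N (\<lambda>(i,j). if i = j then real (card {k. k < N \<and> gdist N E i k = d})
                                     else if gdist N E i j = d then -1 else 0)"

definition mellin_laplacian :: "nat \<Rightarrow> (nat \<Rightarrow> nat \<Rightarrow> bool) \<Rightarrow> real \<Rightarrow> real mat" where
  "mellin_laplacian N E s = mat N N (\<lambda>ij.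
     \<Sum>d = 1..diameter N E. (real d powr (- s)) * (path_laplacian N E d $$ ij))"

definition laplace_laplacian :: "nat \<Rightarrow> (nat \<Rightarrow> nat \<Rightarrow> bool) \<Rightarrow> real \<Rightarrow> real mat" where
  "laplace_laplacian N E l = mat N N (\<lambda>ij. laplacian N E $$ ij +
     (\<Sum>d = 2..diameter N E. exp (- l * real d) * (path_laplacian N E d $$ ij)))"

text \<open>Eigenvalues (with algebraic multiplicity) in increasing order, as the sorted list
  of the roots of the characteristic polynomial; lambda_k is the k-th (1-based).\<close>
definition sorted_eigenvalues :: "real mat \<Rightarrow> real list" where
  "sorted_eigenvalues M = (THE xs. sorted xs \<and> length xs = dim_row M \<and>
      (\<forall>x. count (mset xs) x = order x (char_poly M)))"

definition eig :: "nat \<Rightarrow> real mat \<Rightarrow> real" where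
  "eig k M = sorted_eigenvalues M ! (k - 1)"

end

theory Submission
  imports Defs "Jordan_Normal_Form.Schur_Decomposition" "HOL-Real_Asymp.Real_Asymp"
begin

text \<open>All matrices involved are real symmetric, so they have an orthonormal eigenbasis, and
  \<open>\<lambda>\<^sub>2\<close> is bounded from both sides by Rayleigh quotients: from below on the orthogonal
  complement of the first eigenvector, from above on the span of the first two. Comparing two
  matrices on one test vector that has both properties gives the Weyl-type bound
  \<open>|\<lambda>\<^sub>2(B) - \<lambda>\<^sub>2(A)| \<le> \<Sum>\<^sub>i\<^sub>j |B\<^sub>i\<^sub>j - A\<^sub>i\<^sub>j|\<close>, so \<open>\<lambda>\<^sub>2\<close> depends continuously on
  the entries. As \<open>s, \<lambda> \<rightarrow> \<infinity>\<close> all weights except that of \<open>L\<^sub>1 = L\<close> vanish; as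
  \<open>s, \<lambda> \<rightarrow> 0\<close> all weights tend to 1, and \<open>\<Sum>\<^sub>d L\<^sub>d\<close> is the Laplacian \<open>N I - J\<close> of the
  complete graph, whose \<open>\<lambda>\<^sub>2\<close> is \<open>N\<close>.\<close>

section \<open>Spectral theorem for real symmetric matrices\<close>

lemma transpose_eq_index_sym:
  assumes "transpose_mat A = A" "i < dim_row A" "j < dim_row A"
  shows "A $$ (i,j) = A $$ (j,i)"
  using assms arg_cong[OF assms(1), of "\<lambda>M. M $$ (j,i)"]
  by (metis index_transpose_mat(1) index_transpose_mat(3))

lemma eigenvalue_complexified_symmetric_real:
  fixes A :: "real mat"
  assumes A: "A \<in> carrier_mat n n" and sym: "transpose_mat A = A"
    and ev: "eigenvalue (map_mat complex_of_real A) a"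
  shows "a \<in> \<real>"
proof -
  let ?A = "map_mat complex_of_real A"
  from ev obtain v where v: "v \<in> carrier_vec n" "v \<noteq> 0\<^sub>v n" "?A *\<^sub>v v = a \<cdot>\<^sub>v v"
    unfolding eigenvalue_def eigenvector_def using A by auto
  have Av: "(?A *\<^sub>v v) $ i = (\<Sum>j<n. complex_of_real (A $$ (i,j)) * v $ j)" if "i < n" for i
    using that A v(1) by (auto simp: scalar_prod_def lessThan_atLeast0 intro!: sum.cong)
  define q where "q = (\<Sum>i<n. \<Sum>j<n. cnj (v $ i) * complex_of_real (A $$ (i,j)) * v $ j)"
  define S where "S = (\<Sum>i<n. cnj (v $ i) * v $ i)"
  have "q = (\<Sum>i<n. cnj (v $ i) * (?A *\<^sub>v v) $ i)"
    unfolding q_def by (simp add: Av sum_distrib_left mult.assoc)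
  also have "\<dots> = a * S"
    using v(1) by (simp add: v(3) S_def sum_distrib_left algebra_simps)
  finally have q_eq: "q = a * S" .
  have "cnj q = (\<Sum>i<n. \<Sum>j<n. v $ i * complex_of_real (A $$ (i,j)) * cnj (v $ j))"
    unfolding q_def by (simp add: cnj_sum)
  also have "\<dots> = (\<Sum>j<n. \<Sum>i<n. v $ i * complex_of_real (A $$ (i,j)) * cnj (v $ j))"
    by (rule sum.swap)
  also have "\<dots> = q" unfolding q_def
    using transpose_eq_index_sym[OF sym] A
    by (intro sum.cong refl) (simp add: mult.commute mult.left_commute)
  finally have "q \<in> \<real>" using Reals_cnj_iff by blast
  have S_real: "S = complex_of_real (\<Sum>i<n. (Re (v $ i))\<^sup>2 + (Im (v $ i))\<^sup>2)"
    unfolding S_def of_real_sum by (intro sum.cong refl) (simp only: complex_mult_cnj mult.commute)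
  obtain i where "i < n" "v $ i \<noteq> 0" using v(1,2) by (metis carrier_vecD eq_vecI index_zero_vec)
  then have "(\<Sum>i<n. (Re (v $ i))\<^sup>2 + (Im (v $ i))\<^sup>2) > 0"
    by (intro sum_pos2[of _ i]) (auto simp: complex_neq_0)
  then have "S \<noteq> 0" unfolding S_real of_real_eq_0_iff by linarith
  with \<open>q \<in> \<real>\<close> show ?thesis using q_eq S_real by (metis Reals_divide Reals_of_real nonzero_mult_div_cancel_right)
qed

lemma char_poly_symmetric_splits:
  fixes A :: "real mat"
  assumes A: "A \<in> carrier_mat n n" and sym: "transpose_mat A = A"
  obtains es where "char_poly A = (\<Prod>e\<leftarrow>es. [:-e, 1:])"
proof -
  interpret of_real_poly: map_poly_inj_idom_hom complex_of_real ..
  let ?A = "map_mat complex_of_real A"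
  have A': "?A \<in> carrier_mat n n" using A by auto
  obtain as where as: "char_poly ?A = (\<Prod>a\<leftarrow>as. [:-a, 1:])"
    using char_poly_factorized[OF A'] by blast
  have real: "a \<in> \<real>" if "a \<in> set as" for a
  proof -
    have "poly (char_poly ?A) a = 0" unfolding as using that
      by (simp add: poly_prod_list prod_list_zero_iff)
    then show ?thesis
      using eigenvalue_complexified_symmetric_real[OF A sym] eigenvalue_root_char_poly[OF A'] by blast
  qed
  have "map_poly complex_of_real (\<Prod>e\<leftarrow>map Re as. [:-e, 1:]) =
        (\<Prod>a\<leftarrow>as. map_poly complex_of_real [:-Re a, 1:])"
    by (simp add: of_real_poly.hom_prod_list o_def)
  also have "\<dots> = (\<Prod>a\<leftarrow>as. [:-a, 1:])"
    using real by (intro arg_cong[where f = prod_list] map_cong) (auto simp: hom_distribs)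
  also have "\<dots> = map_poly complex_of_real (char_poly A)"
    using as of_real_hom.char_poly_hom[OF A] by metis
  finally have "char_poly A = (\<Prod>e\<leftarrow>map Re as. [:-e, 1:])"
    by (metis of_real_poly.eq_iff)
  then show thesis by (rule that)
qed

lemma order_linear_factors: "Polynomial.order x (\<Prod>e\<leftarrow>es. [:-e, 1:]) = count (mset es) (x::real)"
proof -
  have "Polynomial.order x (\<Prod>e\<leftarrow>es. [:-e, 1:]) = (\<Sum>e\<leftarrow>es. Polynomial.order x [:-e, 1:])"
    by (subst order_prod_list) (auto simp: o_def)
  also have "\<dots> = count (mset es) x"
    by (induct es) (auto simp: order_linear')
  finally show ?thesis .
qed

lemma length_char_poly_linear_factors:
  assumes "A \<in> carrier_mat n n" "char_poly A = (\<Prod>e\<leftarrow>es. [:-e, 1:])"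
  shows "length es = n"
  using degree_monic_char_poly[OF assms(1)] degree_linear_factors[of uminus es] assms(2) by simp

lemma sorted_eigenvalues_eqI:
  assumes A: "A \<in> carrier_mat n n" and cp: "char_poly A = (\<Prod>e\<leftarrow>ds. [:-e, 1:])"
    and "sorted ds"
  shows "sorted_eigenvalues A = ds"
  unfolding sorted_eigenvalues_def
proof (rule the_equality)
  have "length ds = n" by (rule length_char_poly_linear_factors[OF A cp])
  then show "sorted ds \<and> length ds = dim_row A \<and> (\<forall>x. count (mset ds) x = Polynomial.order x (char_poly A))"
    using \<open>sorted ds\<close> A by (simp add: cp order_linear_factors)
next
  fix xs
  assume "sorted xs \<and> length xs = dim_row A \<and> (\<forall>x. count (mset xs) x = Polynomial.order x (char_poly A))"
  then have "sorted xs" and "\<And>x. count (mset xs) x = count (mset ds) x"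
    by (auto simp: cp order_linear_factors)
  then have "sort ds = xs" by (intro properties_for_sort multiset_eqI)
  then show "xs = ds" using sorted_sort_id[OF \<open>sorted ds\<close>] by simp
qed

lemma sorted_eigenvalues_symmetric:
  fixes A :: "real mat"
  assumes A: "A \<in> carrier_mat n n" and sym: "transpose_mat A = A"
  shows "char_poly A = (\<Prod>e\<leftarrow>sorted_eigenvalues A. [:-e, 1:])" "sorted (sorted_eigenvalues A)"
    "length (sorted_eigenvalues A) = n"
proof -
  obtain es where es: "char_poly A = (\<Prod>e\<leftarrow>es. [:-e, 1:])"
    using char_poly_symmetric_splits[OF A sym] by blast
  have "(\<Prod>e\<leftarrow>sort es. [:-e, 1:]) = (\<Prod>e\<leftarrow>es. [:-e, 1:])"
    by (simp flip: prod_mset_prod_list)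
  with es have cp: "char_poly A = (\<Prod>e\<leftarrow>sort es. [:-e, 1:])" by simp
  have "sorted_eigenvalues A = sort es"
    by (rule sorted_eigenvalues_eqI[OF A cp sorted_sort])
  with cp show "char_poly A = (\<Prod>e\<leftarrow>sorted_eigenvalues A. [:-e, 1:])" "sorted (sorted_eigenvalues A)"
    by auto
  show "length (sorted_eigenvalues A) = n"
    using length_char_poly_linear_factors[OF A cp] \<open>sorted_eigenvalues A = sort es\<close> by simp
qed

lemma orthonormal_basis_extension:
  fixes v :: "real vec"
  assumes v: "v \<in> carrier_vec n" and v0: "v \<noteq> 0\<^sub>v n"
  obtains W c where "W \<in> carrier_mat n n" "transpose_mat W * W = 1\<^sub>m n"
    "W * transpose_mat W = 1\<^sub>m n" "col W 0 = c \<cdot>\<^sub>v v"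
proof -
  interpret cof_vec_space n "TYPE(real)" .
  define b where "b = basis_completion v"
  define ws where "ws = gram_schmidt n b"
  from basis_completion[OF v v0, folded b_def]
  have b: "set b \<subseteq> carrier_vec n" "distinct b" "\<not> lin_dep (set b)" "hd b = v" "length b = n"
    by auto
  have "n \<noteq> 0" using v v0 by auto
  with b obtain vs where b_eq: "b = v # vs" by (cases b) auto
  from gram_schmidt_result[OF b(1-3) refl, folded ws_def]
  have ws: "set ws \<subseteq> carrier_vec n" "corthogonal ws" "length ws = n" by (auto simp: b(5))
  have "ws ! 0 = v"
    using gram_schmidt_hd[OF v, of vs] ws(3) \<open>n \<noteq> 0\<close>
    unfolding ws_def b_eq by (metis hd_conv_nth list.size(3))
  have ws_sq_pos: "ws ! i \<bullet> ws ! i > 0" if "i < n" for i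
    using corthogonalD[OF ws(2), of i i] conjugate_square_ge_0_vec[of "ws ! i"] that ws(3)
    by (simp add: order_le_less)
  define us where "us = map (\<lambda>w. (1 / sqrt (w \<bullet> w)) \<cdot>\<^sub>v w) ws"
  have us: "length us = n" "set us \<subseteq> carrier_vec n" using ws unfolding us_def by auto
  have us_orthonormal: "us ! i \<bullet> us ! j = (if i = j then 1 else 0)" if "i < n" "j < n" for i j
  proof -
    have "ws ! i \<in> carrier_vec n" "ws ! j \<in> carrier_vec n" using that ws by auto
    then have "us ! i \<bullet> us ! j = (ws ! i \<bullet> ws ! j) / (sqrt (ws ! i \<bullet> ws ! i) * sqrt (ws ! j \<bullet> ws ! j))"
      using that ws(3) unfolding us_def
      by (simp add: smult_scalar_prod_distrib scalar_prod_smult_distrib)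
    then show ?thesis
      using corthogonalD[OF ws(2), of i j] ws_sq_pos[OF that(1)] that ws(3) by auto
  qed
  define W where "W = mat_of_cols n us"
  have W: "W \<in> carrier_mat n n" unfolding W_def using us(1) by auto
  have col_W: "col W i = us ! i" if "i < n" for i
    unfolding W_def using us that by (intro col_mat_of_cols) auto
  have WTW: "transpose_mat W * W = 1\<^sub>m n"
    by (rule eq_matI) (use W in \<open>auto simp: col_W us_orthonormal\<close>)
  have "W * transpose_mat W = 1\<^sub>m n"
    by (rule mat_mult_left_right_inverse[OF _ W WTW]) (use W in auto)
  moreover have "col W 0 = (1 / sqrt (v \<bullet> v)) \<cdot>\<^sub>v v"
    using col_W[of 0] \<open>ws ! 0 = v\<close> \<open>n \<noteq> 0\<close> ws(3) unfolding us_def by auto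
  ultimately show thesis using that W WTW by blast
qed

lemma col_0_orthogonal_conjugate_eigenvector:
  fixes W A :: "'a::field mat"
  assumes W: "W \<in> carrier_mat n n" "transpose_mat W * W = 1\<^sub>m n" and A: "A \<in> carrier_mat n n"
    and ev: "A *\<^sub>v col W 0 = e \<cdot>\<^sub>v col W 0" and n: "0 < n"
  shows "col (transpose_mat W * A * W) 0 = e \<cdot>\<^sub>v unit_vec n 0"
proof -
  have w0: "col W 0 \<in> carrier_vec n" using W by (auto intro: carrier_vecI)
  have "col (transpose_mat W * A * W) 0 = (transpose_mat W * A) *\<^sub>v col W 0"
    using W A n by (intro col_mult2[of _ n n _ n]) auto
  also have "\<dots> = transpose_mat W *\<^sub>v (A *\<^sub>v col W 0)"
    using W A w0 by (intro assoc_mult_mat_vec[of _ n n _ n]) auto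
  also have "\<dots> = e \<cdot>\<^sub>v (transpose_mat W *\<^sub>v col W 0)"
    unfolding ev using W w0 by (intro mult_mat_vec[of _ n n]) auto
  also have "transpose_mat W *\<^sub>v col W 0 = col (transpose_mat W * W) 0"
    using W n by (intro col_mult2[symmetric, of _ n n _ n]) auto
  finally show ?thesis using W n by simp
qed

lemma symmetric_deflation:
  fixes A :: "real mat"
  assumes A: "A \<in> carrier_mat (Suc m) (Suc m)" and sym: "transpose_mat A = A" and e: "eigenvalue A e"
  obtains W A' where "W \<in> carrier_mat (Suc m) (Suc m)" "transpose_mat W * W = 1\<^sub>m (Suc m)"
    "A' \<in> carrier_mat m m" "transpose_mat A' = A'"
    "A = W * four_block_mat (mat 1 1 (\<lambda>_. e)) (0\<^sub>m 1 m) (0\<^sub>m m 1) A' * transpose_mat W"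
    "char_poly A = [:-e, 1:] * char_poly A'"
proof -
  let ?n = "Suc m"
  from e A obtain v where v: "v \<in> carrier_vec ?n" "v \<noteq> 0\<^sub>v ?n" "A *\<^sub>v v = e \<cdot>\<^sub>v v"
    unfolding eigenvalue_def eigenvector_def by auto
  obtain W c where W: "W \<in> carrier_mat ?n ?n" and WTW: "transpose_mat W * W = 1\<^sub>m ?n"
    and WWT: "W * transpose_mat W = 1\<^sub>m ?n" and col_W0: "col W 0 = c \<cdot>\<^sub>v v"
    using orthonormal_basis_extension[OF v(1,2)] by blast
  define B where "B = transpose_mat W * A * W"
  have B: "B \<in> carrier_mat ?n ?n" unfolding B_def using W A by auto
  have sym_B: "transpose_mat B = B"
    unfolding B_def using W A sym by (simp add: transpose_mult[of _ ?n ?n _ ?n])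
  have "A *\<^sub>v col W 0 = e \<cdot>\<^sub>v col W 0"
    unfolding col_W0 using A v by (simp add: mult_mat_vec smult_smult_assoc mult.commute)
  then have col_B0: "col B 0 = e \<cdot>\<^sub>v unit_vec ?n 0"
    unfolding B_def using W WTW A by (intro col_0_orthogonal_conjugate_eigenvector) auto
  define A' where "A' = mat m m (\<lambda>(i,j). B $$ (Suc i, Suc j))"
  have A': "A' \<in> carrier_mat m m" unfolding A'_def by simp
  have "transpose_mat A' = A'"
    using transpose_eq_index_sym[OF sym_B] B by (auto simp: A'_def intro!: eq_matI)
  have B_B0: "B $$ (i, 0) = (if i = 0 then e else 0)" "B $$ (0, i) = (if i = 0 then e else 0)"
    if "i < ?n" for i
    using arg_cong[OF col_B0, of "\<lambda>x. x $ i"] transpose_eq_index_sym[OF sym_B, of 0 i] that B by auto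
  define blk where "blk = four_block_mat (mat 1 1 (\<lambda>_. e)) (0\<^sub>m 1 m) (0\<^sub>m m 1) A'"
  have B_blk: "B = blk"
    by (rule eq_matI) (use B B_B0 in \<open>auto simp: blk_def A'_def\<close>)
  have A_eq: "A = W * blk * transpose_mat W"
  proof -
    have "W * B * transpose_mat W = (W * transpose_mat W) * A * (W * transpose_mat W)"
      unfolding B_def using A W by (simp add: assoc_mult_mat[of _ ?n ?n _ ?n _ ?n])
    then show ?thesis using WWT A B_blk by simp
  qed
  have "similar_mat A blk"
    by (rule similar_matI[of _ _ W "transpose_mat W" ?n]) (use A W B B_blk WTW WWT A_eq in auto)
  then have "char_poly A = char_poly blk" by (rule char_poly_similar)
  also have "\<dots> = char_poly (mat 1 1 (\<lambda>_. e)) * char_poly A'"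
    unfolding blk_def using A' by (intro char_poly_four_block_zeros_col) auto
  also have "char_poly (mat 1 1 (\<lambda>_. e)) = [:-e, 1:]"
    by (simp add: char_poly_defs det_def sign_def)
  finally show thesis using that W WTW A' \<open>transpose_mat A' = A'\<close> A_eq blk_def by blast
qed

lemma mult_four_block_diag_mat:
  assumes "A \<in> carrier_mat k k" "B \<in> carrier_mat m m" "C \<in> carrier_mat k k" "D \<in> carrier_mat m m"
  shows "four_block_mat A (0\<^sub>m k m) (0\<^sub>m m k) B * four_block_mat C (0\<^sub>m k m) (0\<^sub>m m k) D =
    four_block_mat (A * C) (0\<^sub>m k m) (0\<^sub>m m k) (B * D)"
  using assms by (subst mult_four_block_mat[of _ k k _ m _ m _ _ k _ m]) auto

lemma transpose_four_block_diag_mat: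
  assumes "A \<in> carrier_mat k k" "B \<in> carrier_mat m m"
  shows "transpose_mat (four_block_mat A (0\<^sub>m k m) (0\<^sub>m m k) B) =
    four_block_mat (transpose_mat A) (0\<^sub>m k m) (0\<^sub>m m k) (transpose_mat B)"
  using assms by (subst transpose_four_block_mat) auto

lemma orthogonal_conjugation_extend:
  fixes W U' D' :: "'a::comm_ring_1 mat"
  assumes W: "W \<in> carrier_mat (Suc m) (Suc m)" "transpose_mat W * W = 1\<^sub>m (Suc m)"
    and U': "U' \<in> carrier_mat m m" "transpose_mat U' * U' = 1\<^sub>m m" and D': "D' \<in> carrier_mat m m"
  defines "U \<equiv> W * four_block_mat (1\<^sub>m 1) (0\<^sub>m 1 m) (0\<^sub>m m 1) U'"
  shows "U \<in> carrier_mat (Suc m) (Suc m)" "transpose_mat U * U = 1\<^sub>m (Suc m)"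
    "W * four_block_mat (mat 1 1 (\<lambda>_. e)) (0\<^sub>m 1 m) (0\<^sub>m m 1) (U' * D' * transpose_mat U') * transpose_mat W =
     U * four_block_mat (mat 1 1 (\<lambda>_. e)) (0\<^sub>m 1 m) (0\<^sub>m m 1) D' * transpose_mat U"
proof -
  let ?n = "Suc m" and ?e = "mat 1 1 (\<lambda>_. e)"
  define B where "B = four_block_mat (1\<^sub>m 1) (0\<^sub>m 1 m) (0\<^sub>m m 1) U'"
  define D where "D = four_block_mat ?e (0\<^sub>m 1 m) (0\<^sub>m m 1) D'"
  have B: "B \<in> carrier_mat ?n ?n" and D: "D \<in> carrier_mat ?n ?n"
    unfolding B_def D_def using U' D' by auto
  have BT: "transpose_mat B = four_block_mat (1\<^sub>m 1) (0\<^sub>m 1 m) (0\<^sub>m m 1) (transpose_mat U')"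
    unfolding B_def using U' by (simp add: transpose_four_block_diag_mat)
  show "U \<in> carrier_mat ?n ?n" unfolding U_def B_def[symmetric] using W B by simp
  have "transpose_mat U * U = transpose_mat B * (transpose_mat W * (W * B))"
    unfolding U_def B_def[symmetric] using W B mult_carrier_mat[OF W(1) B]
    by (simp add: transpose_mult[of _ ?n ?n _ ?n] assoc_mult_mat[of _ ?n ?n _ ?n _ ?n])
  also have "transpose_mat W * (W * B) = (transpose_mat W * W) * B"
    using W(1) B by (intro assoc_mult_mat[symmetric]) auto
  also have "\<dots> = B" using W(2) B by simp
  also have "transpose_mat B * B = 1\<^sub>m ?n"
    unfolding BT unfolding B_def using U' by (simp add: mult_four_block_diag_mat)
  finally show "transpose_mat U * U = 1\<^sub>m ?n" .
  have "B * D * transpose_mat B = four_block_mat ?e (0\<^sub>m 1 m) (0\<^sub>m m 1) (U' * D' * transpose_mat U')"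
    unfolding BT unfolding B_def D_def using U' D' by (simp add: mult_four_block_diag_mat)
  moreover have "U * D * transpose_mat U = W * (B * D * transpose_mat B) * transpose_mat W"
    unfolding U_def B_def[symmetric] using W B D
    by (simp add: transpose_mult[of _ ?n ?n _ ?n] assoc_mult_mat[of _ ?n ?n _ ?n _ ?n]
        mult_carrier_mat[of _ ?n ?n _ ?n])
  ultimately show "W * four_block_mat ?e (0\<^sub>m 1 m) (0\<^sub>m m 1) (U' * D' * transpose_mat U') * transpose_mat W =
      U * four_block_mat ?e (0\<^sub>m 1 m) (0\<^sub>m m 1) D' * transpose_mat U"
    unfolding D_def by simp
qed

lemma mat_diag_Cons:
  "mat_diag (Suc m) (\<lambda>k. (e # es) ! k) =
    four_block_mat (mat 1 1 (\<lambda>_. e)) (0\<^sub>m 1 m) (0\<^sub>m m 1) (mat_diag m (\<lambda>k. es ! k))"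
  by (rule eq_matI) (auto simp: mat_diag_def)

lemma orthogonal_diagonalization:
  fixes A :: "real mat"
  assumes "A \<in> carrier_mat n n" "transpose_mat A = A" "char_poly A = (\<Prod>e\<leftarrow>es. [:-e, 1:])"
  shows "\<exists>U. U \<in> carrier_mat n n \<and> transpose_mat U * U = 1\<^sub>m n \<and>
    A = U * mat_diag n (\<lambda>k. es ! k) * transpose_mat U"
  using assms
proof (induct es arbitrary: n A)
  case Nil
  then have "n = 0" using length_char_poly_linear_factors[OF Nil(1,3)] by simp
  with Nil(1) show ?case by (intro exI[of _ "1\<^sub>m n"]) (auto intro!: eq_matI)
next
  case (Cons e es n A)
  define m where "m = length es"
  have n: "n = Suc m" using length_char_poly_linear_factors[OF Cons(2,4)] unfolding m_def by simp
  note A = Cons(2)[unfolded n] and sym = Cons(3)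
  have "poly (char_poly A) e = 0" unfolding Cons(4) by (simp add: poly_prod_list prod_list_zero_iff)
  then have "eigenvalue A e" using eigenvalue_root_char_poly[OF A] by simp
  then obtain W A' where W: "W \<in> carrier_mat (Suc m) (Suc m)" "transpose_mat W * W = 1\<^sub>m (Suc m)"
      and A': "A' \<in> carrier_mat m m" "transpose_mat A' = A'"
      and A_eq: "A = W * four_block_mat (mat 1 1 (\<lambda>_. e)) (0\<^sub>m 1 m) (0\<^sub>m m 1) A' * transpose_mat W"
      and cp: "char_poly A = [:-e, 1:] * char_poly A'"
    by (rule symmetric_deflation[OF A sym])
  have "[:-e, 1:] * char_poly A' = [:-e, 1:] * (\<Prod>e\<leftarrow>es. [:-e, 1:])"
    using cp Cons(4) by simp
  then have "char_poly A' = (\<Prod>e\<leftarrow>es. [:-e, 1:])" by (rule mult_left_cancel[THEN iffD1, rotated]) simp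
  from Cons(1)[OF A' this] obtain U' where U': "U' \<in> carrier_mat m m" "transpose_mat U' * U' = 1\<^sub>m m"
    and A'_eq: "A' = U' * mat_diag m (\<lambda>k. es ! k) * transpose_mat U'"
    by blast
  note ext = orthogonal_conjugation_extend[OF W U' mat_diag_dim[of m "\<lambda>k. es ! k"]]
  have "A = (W * four_block_mat (1\<^sub>m 1) (0\<^sub>m 1 m) (0\<^sub>m m 1) U') * mat_diag n (\<lambda>k. (e # es) ! k) *
      transpose_mat (W * four_block_mat (1\<^sub>m 1) (0\<^sub>m 1 m) (0\<^sub>m m 1) U')"
    unfolding A_eq A'_eq n mat_diag_Cons by (rule ext(3))
  with ext(1,2) show ?case unfolding n by blast
qed

text \<open>Column \<open>k\<close> of \<open>U\<close> is a unit eigenvector for the \<open>(k+1)\<close>-st smallest eigenvalue, so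
  column 0 belongs to \<open>\<lambda>\<^sub>1\<close> and column 1 to \<open>\<lambda>\<^sub>2 = eig 2 A\<close>.\<close>

definition orthonormal_eigenbasis :: "nat \<Rightarrow> real mat \<Rightarrow> real mat \<Rightarrow> bool" where
  "orthonormal_eigenbasis n A U \<longleftrightarrow> U \<in> carrier_mat n n \<and> transpose_mat U * U = 1\<^sub>m n \<and>
     U * transpose_mat U = 1\<^sub>m n \<and> A = U * mat_diag n (\<lambda>k. sorted_eigenvalues A ! k) * transpose_mat U"

lemma orthonormal_eigenbasisD:
  assumes "orthonormal_eigenbasis n A U"
  shows "U \<in> carrier_mat n n" "transpose_mat U * U = 1\<^sub>m n" "U * transpose_mat U = 1\<^sub>m n"
  using assms unfolding orthonormal_eigenbasis_def by blast+

theorem symmetric_orthonormal_eigenbasis: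
  fixes A :: "real mat"
  assumes A: "A \<in> carrier_mat n n" and sym: "transpose_mat A = A"
  obtains U where "orthonormal_eigenbasis n A U"
proof -
  obtain U where U: "U \<in> carrier_mat n n" "transpose_mat U * U = 1\<^sub>m n"
    "A = U * mat_diag n (\<lambda>k. sorted_eigenvalues A ! k) * transpose_mat U"
    using orthogonal_diagonalization[OF A sym sorted_eigenvalues_symmetric(1)[OF A sym]] by blast
  moreover have "U * transpose_mat U = 1\<^sub>m n"
    by (rule mat_mult_left_right_inverse[OF _ U(1,2)]) (use U in auto)
  ultimately show thesis using that unfolding orthonormal_eigenbasis_def by blast
qed

section \<open>Continuity of the second eigenvalue\<close>

lemma scalar_prod_self_eq_sum_squares:
  fixes x :: "'a::comm_ring_1 vec"
  shows "x \<in> carrier_vec n \<Longrightarrow> x \<bullet> x = (\<Sum>k<n. (x $ k)\<^sup>2)"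
  by (simp add: scalar_prod_def power2_eq_square lessThan_atLeast0)

lemma quadratic_form_mat_diag:
  fixes y :: "'a::comm_ring_1 vec"
  assumes "y \<in> carrier_vec n"
  shows "y \<bullet> (mat_diag n f *\<^sub>v y) = (\<Sum>k<n. f k * (y $ k)\<^sup>2)"
proof -
  have diag: "(mat_diag n f *\<^sub>v y) $ k = f k * y $ k" if "k < n" for k
    using that assms by (simp add: mat_diag_def scalar_prod_def if_distrib[of "\<lambda>a. a * _"] cong: if_cong)
  have "dim_row (mat_diag n f) = n" by (simp add: mat_diag_def)
  then show ?thesis
    unfolding scalar_prod_def[of y] lessThan_atLeast0
    by (intro sum.cong) (auto simp: diag power2_eq_square simp del: index_mult_mat_vec)
qed

lemma orthogonal_coordinates_scalar_prod_self:
  fixes U :: "'a::comm_ring_1 mat"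
  assumes U: "U \<in> carrier_mat n n" and UUT: "U * transpose_mat U = 1\<^sub>m n" and x: "x \<in> carrier_vec n"
  shows "(transpose_mat U *\<^sub>v x) \<bullet> (transpose_mat U *\<^sub>v x) = x \<bullet> x"
proof -
  have "(transpose_mat U *\<^sub>v x) \<bullet> (transpose_mat U *\<^sub>v x) = x \<bullet> (U *\<^sub>v (transpose_mat U *\<^sub>v x))"
    using U x by (intro transpose_vec_mult_scalar[of U n n]) auto
  also have "\<dots> = x \<bullet> x" using U UUT x by (simp flip: assoc_mult_mat_vec[of _ n n _ n])
  finally show ?thesis .
qed

lemma orthonormal_eigenbasis_coordinates:
  assumes U: "orthonormal_eigenbasis n A U" and z: "z \<in> carrier_vec n"
  shows "transpose_mat U *\<^sub>v (U *\<^sub>v z) = z" "(U *\<^sub>v z) \<bullet> (U *\<^sub>v z) = z \<bullet> z"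
proof -
  note U_carr = orthonormal_eigenbasisD(1)[OF U]
  show Uz: "transpose_mat U *\<^sub>v (U *\<^sub>v z) = z"
    using U_carr orthonormal_eigenbasisD(2)[OF U] z by (simp flip: assoc_mult_mat_vec[of _ n n _ n])
  show "(U *\<^sub>v z) \<bullet> (U *\<^sub>v z) = z \<bullet> z"
    using orthogonal_coordinates_scalar_prod_self[OF U_carr orthonormal_eigenbasisD(3)[OF U], of "U *\<^sub>v z"]
      U_carr z Uz by simp
qed

lemma quadratic_form_eigenbasis:
  assumes U: "orthonormal_eigenbasis n A U" and x: "x \<in> carrier_vec n"
  shows "x \<bullet> (A *\<^sub>v x) = (\<Sum>k<n. sorted_eigenvalues A ! k * ((transpose_mat U *\<^sub>v x) $ k)\<^sup>2)"
proof -
  define D where "D = mat_diag n (\<lambda>k. sorted_eigenvalues A ! k)"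
  let ?y = "transpose_mat U *\<^sub>v x"
  have U_carr: "U \<in> carrier_mat n n" and A_eq: "A = U * D * transpose_mat U"
    using U unfolding orthonormal_eigenbasis_def D_def by blast+
  have D: "D \<in> carrier_mat n n" unfolding D_def by simp
  have "x \<bullet> (A *\<^sub>v x) = x \<bullet> (U *\<^sub>v (D *\<^sub>v ?y))"
    unfolding A_eq using U_carr D x
    by (simp add: assoc_mult_mat[of _ n n _ n _ n] assoc_mult_mat_vec[of U n n "D * transpose_mat U" n])
  also have "\<dots> = ?y \<bullet> (D *\<^sub>v ?y)"
    using U_carr D x by (intro transpose_vec_mult_scalar[symmetric, of U n n]) auto
  also have "\<dots> = (\<Sum>k<n. sorted_eigenvalues A ! k * (?y $ k)\<^sup>2)"
    unfolding D_def using U_carr x by (intro quadratic_form_mat_diag) auto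
  finally show ?thesis .
qed

lemma eig2_mult_le_quadratic_form:
  assumes A: "A \<in> carrier_mat n n" "transpose_mat A = A" and U: "orthonormal_eigenbasis n A U"
    and x: "x \<in> carrier_vec n" and x_orth: "(transpose_mat U *\<^sub>v x) $ 0 = 0"
  shows "eig 2 A * (x \<bullet> x) \<le> x \<bullet> (A *\<^sub>v x)"
proof -
  let ?ds = "sorted_eigenvalues A" and ?y = "transpose_mat U *\<^sub>v x"
  have U_carr: "U \<in> carrier_mat n n" and "U * transpose_mat U = 1\<^sub>m n"
    using orthonormal_eigenbasisD[OF U] by auto
  then have "x \<bullet> x = (\<Sum>k<n. (?y $ k)\<^sup>2)"
    using x orthogonal_coordinates_scalar_prod_self[of U n x]
    by (simp add: scalar_prod_self_eq_sum_squares[of ?y n])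
  then have "eig 2 A * (x \<bullet> x) = (\<Sum>k<n. ?ds ! 1 * (?y $ k)\<^sup>2)"
    by (simp add: eig_def sum_distrib_left)
  also have "\<dots> \<le> (\<Sum>k<n. ?ds ! k * (?y $ k)\<^sup>2)"
  proof (rule sum_mono)
    fix k assume "k \<in> {..<n}"
    then have "k = 0 \<or> ?ds ! 1 \<le> ?ds ! k"
      using sorted_eigenvalues_symmetric(2,3)[OF A] by (auto intro: sorted_nth_mono)
    then show "?ds ! 1 * (?y $ k)\<^sup>2 \<le> ?ds ! k * (?y $ k)\<^sup>2"
      using x_orth by (auto intro: mult_right_mono)
  qed
  also have "\<dots> = x \<bullet> (A *\<^sub>v x)" using quadratic_form_eigenbasis[OF U x] by simp
  finally show ?thesis .
qed

lemma quadratic_form_le_eig2_mult: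
  assumes A: "A \<in> carrier_mat n n" "transpose_mat A = A" and U: "orthonormal_eigenbasis n A U"
    and n: "2 \<le> n" and x: "x \<in> carrier_vec n"
    and x_span: "\<And>k. 2 \<le> k \<Longrightarrow> k < n \<Longrightarrow> (transpose_mat U *\<^sub>v x) $ k = 0"
  shows "x \<bullet> (A *\<^sub>v x) \<le> eig 2 A * (x \<bullet> x)"
proof -
  let ?ds = "sorted_eigenvalues A" and ?y = "transpose_mat U *\<^sub>v x"
  have U_carr: "U \<in> carrier_mat n n" and "U * transpose_mat U = 1\<^sub>m n"
    using orthonormal_eigenbasisD[OF U] by auto
  then have norm_x: "x \<bullet> x = (\<Sum>k<n. (?y $ k)\<^sup>2)"
    using x orthogonal_coordinates_scalar_prod_self[of U n x]
    by (simp add: scalar_prod_self_eq_sum_squares[of ?y n])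
  have "x \<bullet> (A *\<^sub>v x) = (\<Sum>k<n. ?ds ! k * (?y $ k)\<^sup>2)" using quadratic_form_eigenbasis[OF U x] .
  also have "\<dots> \<le> (\<Sum>k<n. ?ds ! 1 * (?y $ k)\<^sup>2)"
  proof (rule sum_mono)
    fix k assume "k \<in> {..<n}"
    then have "2 \<le> k \<or> ?ds ! k \<le> ?ds ! 1"
      using sorted_eigenvalues_symmetric(2,3)[OF A] n by (auto intro: sorted_nth_mono)
    then show "?ds ! k * (?y $ k)\<^sup>2 \<le> ?ds ! 1 * (?y $ k)\<^sup>2"
      using x_span \<open>k \<in> {..<n}\<close> by (auto intro: mult_right_mono)
  qed
  also have "\<dots> = eig 2 A * (x \<bullet> x)" by (simp add: norm_x eig_def sum_distrib_left)
  finally show ?thesis .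
qed

lemma exists_orthogonal_vec_in_first_two_coordinates:
  fixes w :: "'a::comm_ring_1 vec"
  assumes n: "2 \<le> n" and w: "w \<in> carrier_vec n"
  obtains z where "z \<in> carrier_vec n" "z \<noteq> 0\<^sub>v n" "\<And>k. 2 \<le> k \<Longrightarrow> k < n \<Longrightarrow> z $ k = 0" "w \<bullet> z = 0"
proof (cases "w $ 0 = 0 \<and> w $ 1 = 0")
  case True
  have "unit_vec n 0 \<noteq> (0\<^sub>v n :: 'a vec)" using n arg_cong[of _ _ "\<lambda>v. v $ 0"] by fastforce
  with True show thesis using n w by (intro that[of "unit_vec n 0"]) auto
next
  case False
  define z where "z = w $ 1 \<cdot>\<^sub>v unit_vec n 0 - w $ 0 \<cdot>\<^sub>v unit_vec n 1"
  have z: "z \<in> carrier_vec n" unfolding z_def by simp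
  have z01: "z $ 0 = w $ 1" "z $ 1 = - w $ 0" using n unfolding z_def by auto
  have "z \<noteq> 0\<^sub>v n"
  proof
    assume "z = 0\<^sub>v n"
    then have "z $ 0 = 0" "z $ 1 = 0" using n by auto
    then show False using False z01 by simp
  qed
  moreover have "w \<bullet> z = 0"
    using n w unfolding z_def
    by (simp add: scalar_prod_minus_distrib[of _ n] scalar_prod_smult_distrib[of _ n] mult.commute)
  moreover have "z $ k = 0" if "2 \<le> k" "k < n" for k
    using that unfolding z_def by auto
  ultimately show thesis using z that by blast
qed

lemma quadratic_form_le_sum_abs_entries:
  fixes A :: "real mat"
  assumes A: "A \<in> carrier_mat n n" and x: "x \<in> carrier_vec n"
  shows "x \<bullet> (A *\<^sub>v x) \<le> (\<Sum>i<n. \<Sum>j<n. \<bar>A $$ (i,j)\<bar>) * (x \<bullet> x)"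
proof -
  have sq_le: "(x $ i)\<^sup>2 \<le> x \<bullet> x" if "i < n" for i
    unfolding scalar_prod_self_eq_sum_squares[OF x] using that
    by (intro member_le_sum) auto
  have prod_le: "\<bar>x $ i * x $ j\<bar> \<le> x \<bullet> x" if "i < n" "j < n" for i j
  proof -
    have "2 * (\<bar>x $ i\<bar> * \<bar>x $ j\<bar>) \<le> \<bar>x $ i\<bar>\<^sup>2 + \<bar>x $ j\<bar>\<^sup>2"
      using sum_squares_bound[of "\<bar>x $ i\<bar>" "\<bar>x $ j\<bar>"] by simp
    then show ?thesis using sq_le[OF that(1)] sq_le[OF that(2)] by (simp add: abs_mult)
  qed
  have "x \<bullet> (A *\<^sub>v x) = (\<Sum>i<n. \<Sum>j<n. A $$ (i,j) * (x $ i * x $ j))"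
    using A x by (simp add: scalar_prod_def lessThan_atLeast0 sum_distrib_left mult_ac)
  also have "\<dots> \<le> (\<Sum>i<n. \<Sum>j<n. \<bar>A $$ (i,j)\<bar> * (x \<bullet> x))"
  proof (intro sum_mono)
    fix i j assume "i \<in> {..<n}" "j \<in> {..<n}"
    have "A $$ (i,j) * (x $ i * x $ j) \<le> \<bar>A $$ (i,j)\<bar> * \<bar>x $ i * x $ j\<bar>"
      by (simp flip: abs_mult)
    also have "\<dots> \<le> \<bar>A $$ (i,j)\<bar> * (x \<bullet> x)"
      using prod_le \<open>i \<in> {..<n}\<close> \<open>j \<in> {..<n}\<close> by (simp add: mult_left_mono)
    finally show "A $$ (i,j) * (x $ i * x $ j) \<le> \<bar>A $$ (i,j)\<bar> * (x \<bullet> x)" .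
  qed
  also have "\<dots> = (\<Sum>i<n. \<Sum>j<n. \<bar>A $$ (i,j)\<bar>) * (x \<bullet> x)" by (simp add: sum_distrib_right)
  finally show ?thesis .
qed

lemma scalar_prod_self_pos:
  fixes z :: "real vec"
  assumes "z \<in> carrier_vec n" "z \<noteq> 0\<^sub>v n"
  shows "z \<bullet> z > 0"
proof -
  have "conjugate z = z" by (auto intro: eq_vecI)
  then show ?thesis using conjugate_square_greater_0_vec[OF assms(1)] assms(2) by simp
qed

lemma exists_test_vector_in_first_two_eigenvectors:
  assumes V: "orthonormal_eigenbasis n A V" and n: "2 \<le> n" and w: "w \<in> carrier_vec n"
  obtains x where "x \<in> carrier_vec n" "x \<bullet> x > 0" "w \<bullet> x = 0"
    "\<And>k. 2 \<le> k \<Longrightarrow> k < n \<Longrightarrow> (transpose_mat V *\<^sub>v x) $ k = 0"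
proof -
  note V_carr = orthonormal_eigenbasisD(1)[OF V]
  have "transpose_mat V *\<^sub>v w \<in> carrier_vec n" using V_carr w by simp
  then obtain z where z: "z \<in> carrier_vec n" "z \<noteq> 0\<^sub>v n"
    and z_span: "\<And>k. 2 \<le> k \<Longrightarrow> k < n \<Longrightarrow> z $ k = 0"
    and z_orth: "(transpose_mat V *\<^sub>v w) \<bullet> z = 0"
    by (rule exists_orthogonal_vec_in_first_two_coordinates[OF n]) blast
  show thesis
  proof (rule that[of "V *\<^sub>v z"])
    show "V *\<^sub>v z \<in> carrier_vec n" using V_carr z by simp
    show "(V *\<^sub>v z) \<bullet> (V *\<^sub>v z) > 0"
      using orthonormal_eigenbasis_coordinates(2)[OF V z(1)] scalar_prod_self_pos[OF z] by simp
    show "w \<bullet> (V *\<^sub>v z) = 0" using transpose_vec_mult_scalar[OF V_carr z(1) w] z_orth by simp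
    show "(transpose_mat V *\<^sub>v (V *\<^sub>v z)) $ k = 0" if "2 \<le> k" "k < n" for k
      using orthonormal_eigenbasis_coordinates(1)[OF V z(1)] z_span that by simp
  qed
qed

lemma eig2_le_eig2_add_sum_abs_diff:
  fixes A B :: "real mat"
  assumes A: "A \<in> carrier_mat n n" "transpose_mat A = A"
    and B: "B \<in> carrier_mat n n" "transpose_mat B = B" and n: "2 \<le> n"
  shows "eig 2 B \<le> eig 2 A + (\<Sum>i<n. \<Sum>j<n. \<bar>B $$ (i,j) - A $$ (i,j)\<bar>)"
proof -
  obtain V where V: "orthonormal_eigenbasis n A V" using symmetric_orthonormal_eigenbasis[OF A] .
  obtain U where U: "orthonormal_eigenbasis n B U" using symmetric_orthonormal_eigenbasis[OF B] .
  have "col U 0 \<in> carrier_vec n" using orthonormal_eigenbasisD(1)[OF U] by (auto intro: carrier_vecI)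
  then obtain x where x: "x \<in> carrier_vec n" "x \<bullet> x > 0" and "col U 0 \<bullet> x = 0"
    and x_span: "\<And>k. 2 \<le> k \<Longrightarrow> k < n \<Longrightarrow> (transpose_mat V *\<^sub>v x) $ k = 0"
    by (rule exists_test_vector_in_first_two_eigenvectors[OF V n]) blast
  then have Ux: "(transpose_mat U *\<^sub>v x) $ 0 = 0" using orthonormal_eigenbasisD(1)[OF U] n by simp
  define S where "S = (\<Sum>i<n. \<Sum>j<n. \<bar>B $$ (i,j) - A $$ (i,j)\<bar>)"
  have "x \<bullet> ((B - A) *\<^sub>v x) \<le> (\<Sum>i<n. \<Sum>j<n. \<bar>(B - A) $$ (i,j)\<bar>) * (x \<bullet> x)"
    using A B x by (intro quadratic_form_le_sum_abs_entries) auto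
  also have "(\<Sum>i<n. \<Sum>j<n. \<bar>(B - A) $$ (i,j)\<bar>) = S"
    unfolding S_def using A B by (intro sum.cong refl) auto
  finally have diff: "x \<bullet> ((B - A) *\<^sub>v x) \<le> S * (x \<bullet> x)" .
  have "eig 2 B * (x \<bullet> x) \<le> x \<bullet> (B *\<^sub>v x)"
    by (rule eig2_mult_le_quadratic_form[OF B U x(1) Ux])
  also have "\<dots> = x \<bullet> (A *\<^sub>v x) + x \<bullet> ((B - A) *\<^sub>v x)"
    using A B x by (simp add: minus_mult_distrib_mat_vec[of _ n n] scalar_prod_minus_distrib[of _ n])
  also have "\<dots> \<le> eig 2 A * (x \<bullet> x) + S * (x \<bullet> x)"
    using quadratic_form_le_eig2_mult[OF A V n x(1) x_span] diff by (rule add_mono)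
  finally have "eig 2 B * (x \<bullet> x) \<le> (eig 2 A + S) * (x \<bullet> x)" by (simp only: distrib_right)
  then show ?thesis using x(2) unfolding S_def by (rule mult_right_le_imp_le)
qed

lemma tendsto_eig2:
  fixes M :: "'a \<Rightarrow> real mat"
  assumes n: "2 \<le> n"
    and M: "\<And>t. M t \<in> carrier_mat n n" "\<And>t. transpose_mat (M t) = M t"
    and M0: "M0 \<in> carrier_mat n n" "transpose_mat M0 = M0"
    and lim: "\<And>i j. i < n \<Longrightarrow> j < n \<Longrightarrow> ((\<lambda>t. M t $$ (i,j)) \<longlongrightarrow> M0 $$ (i,j)) F"
  shows "((\<lambda>t. eig 2 (M t)) \<longlongrightarrow> eig 2 M0) F"
proof -
  define S where "S t = (\<Sum>i<n. \<Sum>j<n. \<bar>M t $$ (i,j) - M0 $$ (i,j)\<bar>)" for t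
  have S0: "(S \<longlongrightarrow> 0) F"
    unfolding S_def by (intro tendsto_null_sum tendsto_rabs_zero LIM_zero lim) auto
  have bound: "\<forall>t. norm (eig 2 (M t) - eig 2 M0) \<le> norm (S t) * 1"
  proof
    fix t
    have "(\<Sum>i<n. \<Sum>j<n. \<bar>M0 $$ (i,j) - M t $$ (i,j)\<bar>) = S t"
      unfolding S_def by (intro sum.cong refl) (rule abs_minus_commute)
    then have "eig 2 M0 \<le> eig 2 (M t) + S t"
      using eig2_le_eig2_add_sum_abs_diff[OF M(1)[of t] M(2)[of t] M0 n] by simp
    moreover have "eig 2 (M t) \<le> eig 2 M0 + S t"
      unfolding S_def by (rule eig2_le_eig2_add_sum_abs_diff[OF M0 M(1)[of t] M(2)[of t] n])
    moreover have "S t \<ge> 0" unfolding S_def by (intro sum_nonneg) auto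
    ultimately show "norm (eig 2 (M t) - eig 2 M0) \<le> norm (S t) * 1" by simp
  qed
  have "((\<lambda>t. eig 2 (M t) - eig 2 M0) \<longlongrightarrow> 0) F"
    by (rule tendsto_0_le[OF S0 always_eventually[OF bound]])
  then show ?thesis by (rule LIM_zero_cancel)
qed

section \<open>The Laplacian of the complete graph\<close>

definition complete_laplacian :: "nat \<Rightarrow> real mat" where
  "complete_laplacian n = mat n n (\<lambda>(i,j). if i = j then real n - 1 else -1)"

lemma complete_laplacian_carrier: "complete_laplacian n \<in> carrier_mat n n"
  unfolding complete_laplacian_def by simp

lemma complete_laplacian_symmetric: "transpose_mat (complete_laplacian n) = complete_laplacian n"
  unfolding complete_laplacian_def by (auto intro: eq_matI)

lemma quadratic_form_complete_laplacian:
  assumes x: "x \<in> carrier_vec n"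
  shows "x \<bullet> (complete_laplacian n *\<^sub>v x) = real n * (x \<bullet> x) - (vec n (\<lambda>_. 1) \<bullet> x)\<^sup>2"
proof -
  define s where "s = (\<Sum>j<n. x $ j)"
  have "vec n (\<lambda>_. 1) \<bullet> x = s" unfolding s_def using x by (simp add: scalar_prod_def lessThan_atLeast0)
  have Kx: "(complete_laplacian n *\<^sub>v x) $ i = real n * x $ i - s" if "i < n" for i
  proof -
    have "(complete_laplacian n *\<^sub>v x) $ i = (\<Sum>j<n. (if i = j then real n * x $ j else 0) - x $ j)"
      using that x by (auto simp: complete_laplacian_def scalar_prod_def lessThan_atLeast0 algebra_simps
          intro!: sum.cong)
    then show ?thesis using that by (simp add: sum_subtractf s_def)
  qed
  have "x \<bullet> (complete_laplacian n *\<^sub>v x) = (\<Sum>i<n. real n * (x $ i)\<^sup>2 - s * x $ i)"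
    unfolding scalar_prod_def[of x] lessThan_atLeast0 using x Kx complete_laplacian_carrier[of n]
    by (intro sum.cong) (auto simp: power2_eq_square right_diff_distrib simp del: index_mult_mat_vec)
  also have "\<dots> = real n * (x \<bullet> x) - s\<^sup>2"
    using x by (simp add: sum_subtractf sum_distrib_left scalar_prod_self_eq_sum_squares power2_eq_square s_def)
  finally show ?thesis using \<open>vec n (\<lambda>_. 1) \<bullet> x = s\<close> by simp
qed

lemma eig2_complete_laplacian:
  assumes n: "2 \<le> n"
  shows "eig 2 (complete_laplacian n) = real n"
proof -
  let ?K = "complete_laplacian n" and ?one = "vec n (\<lambda>_. 1) :: real vec"
  note K = complete_laplacian_carrier complete_laplacian_symmetric
  obtain U where U: "orthonormal_eigenbasis n ?K U" using symmetric_orthonormal_eigenbasis[OF K] .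
  note U_carr = orthonormal_eigenbasisD(1)[OF U]
  have "eig 2 ?K \<le> real n"
  proof -
    have u1: "unit_vec n 1 \<in> carrier_vec n" by simp
    define x where "x = U *\<^sub>v unit_vec n 1"
    have x: "x \<in> carrier_vec n" unfolding x_def using U_carr by simp
    have "x \<bullet> x = 1" unfolding x_def orthonormal_eigenbasis_coordinates(2)[OF U u1] using n by simp
    moreover have "(transpose_mat U *\<^sub>v x) $ 0 = 0"
      unfolding x_def orthonormal_eigenbasis_coordinates(1)[OF U u1] using n by simp
    then have "eig 2 ?K * (x \<bullet> x) \<le> x \<bullet> (?K *\<^sub>v x)"
      by (rule eig2_mult_le_quadratic_form[OF K U x])
    ultimately have "eig 2 ?K \<le> real n - (?one \<bullet> x)\<^sup>2"
      unfolding quadratic_form_complete_laplacian[OF x] by simp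
    then show ?thesis using zero_le_power2[of "?one \<bullet> x"] by linarith
  qed
  moreover have "real n \<le> eig 2 ?K"
  proof -
    have "?one \<in> carrier_vec n" by simp
    then obtain x where x: "x \<in> carrier_vec n" "x \<bullet> x > 0" and "?one \<bullet> x = 0"
      and x_span: "\<And>k. 2 \<le> k \<Longrightarrow> k < n \<Longrightarrow> (transpose_mat U *\<^sub>v x) $ k = 0"
      by (rule exists_test_vector_in_first_two_eigenvectors[OF U n]) blast
    then have "real n * (x \<bullet> x) = x \<bullet> (?K *\<^sub>v x)"
      unfolding quadratic_form_complete_laplacian[OF x(1)] by simp
    also have "\<dots> \<le> eig 2 ?K * (x \<bullet> x)"
      by (rule quadratic_form_le_eig2_mult[OF K U n x(1) x_span])
    finally show ?thesis using x(2) by simp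
  qed
  ultimately show ?thesis by simp
qed

section \<open>Distances and path Laplacians\<close>

lemma laplacian_carrier: "laplacian N E \<in> carrier_mat N N"
  unfolding laplacian_def by simp

lemma mellin_laplacian_carrier: "mellin_laplacian N E s \<in> carrier_mat N N"
  unfolding mellin_laplacian_def by simp

lemma laplace_laplacian_carrier: "laplace_laplacian N E l \<in> carrier_mat N N"
  unfolding laplace_laplacian_def by simp

locale connected_simple_graph =
  fixes N :: nat and E :: "nat \<Rightarrow> nat \<Rightarrow> bool"
  assumes simple: "simple_graph N E" and connected: "connected_graph N E"
begin

lemma edge_sym: "E j i \<longleftrightarrow> E i j"
  using simple unfolding simple_graph_def by blast

lemma shortest_walk_exists:
  assumes "i < N" "j < N"
  obtains xs where "walk N E xs" "hd xs = i" "last xs = j" "length xs = Suc (gdist N E i j)"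
proof -
  obtain xs where xs: "walk N E xs" "hd xs = i" "last xs = j"
    using connected assms unfolding connected_graph_def by blast
  then have "length xs = Suc (length xs - 1)" unfolding walk_def by (cases xs) auto
  with xs have "\<exists>k xs. walk N E xs \<and> hd xs = i \<and> last xs = j \<and> length xs = Suc k" by blast
  then have "\<exists>xs. walk N E xs \<and> hd xs = i \<and> last xs = j \<and> length xs = Suc (gdist N E i j)"
    unfolding gdist_def by (rule LeastI_ex)
  with that show thesis by blast
qed

lemma gdist_le_walk:
  assumes "walk N E xs" "hd xs = i" "last xs = j" "length xs = Suc k"
  shows "gdist N E i j \<le> k"
  unfolding gdist_def by (rule Least_le) (use assms in blast)

lemma gdist_eq_0_iff:
  assumes "i < N" "j < N"
  shows "gdist N E i j = 0 \<longleftrightarrow> i = j"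
proof
  assume "gdist N E i j = 0"
  then obtain xs where "walk N E xs" "hd xs = i" "last xs = j" "length xs = 1"
    using shortest_walk_exists[OF assms] by auto
  then show "i = j" by (cases xs) auto
next
  assume "i = j"
  then show "gdist N E i j = 0"
    using gdist_le_walk[of "[i]" i i 0] assms unfolding walk_def by auto
qed

lemma gdist_eq_1_iff:
  assumes "i < N" "j < N"
  shows "gdist N E i j = 1 \<longleftrightarrow> E i j"
proof
  assume "gdist N E i j = 1"
  then obtain xs where xs: "walk N E xs" "hd xs = i" "last xs = j" "length xs = Suc (Suc 0)"
    using shortest_walk_exists[OF assms] by auto
  then obtain a b where "xs = [a, b]" by (cases xs; cases "tl xs") auto
  with xs show "E i j" unfolding walk_def by auto
next
  assume "E i j"
  then have "walk N E [i, j]" and "i \<noteq> j"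
    using assms simple unfolding walk_def simple_graph_def by (auto simp: less_Suc_eq)
  then show "gdist N E i j = 1"
    using gdist_le_walk[of "[i, j]" i j 1] gdist_eq_0_iff[OF assms] by fastforce
qed

lemma walk_rev:
  assumes "walk N E xs"
  shows "walk N E (rev xs)"
  unfolding walk_def
proof (intro conjI allI impI)
  show "rev xs \<noteq> []" "set (rev xs) \<subseteq> {..<N}" using assms unfolding walk_def by auto
  fix k assume k: "Suc k < length (rev xs)"
  define m where "m = length xs - Suc (Suc k)"
  have "E (xs ! m) (xs ! Suc m)" using assms k unfolding walk_def m_def by auto
  moreover have "rev xs ! k = xs ! Suc m" "rev xs ! Suc k = xs ! m"
    using k unfolding m_def by (auto simp: rev_nth Suc_diff_Suc)
  ultimately show "E (rev xs ! k) (rev xs ! Suc k)" by (simp add: edge_sym)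
qed

lemma gdist_sym:
  assumes "i < N" "j < N"
  shows "gdist N E i j = gdist N E j i"
proof -
  have "gdist N E i j \<le> gdist N E j i" if ij: "i < N" "j < N" for i j
  proof -
    obtain xs where xs: "walk N E xs" "hd xs = j" "last xs = i" "length xs = Suc (gdist N E j i)"
      using shortest_walk_exists[OF ij(2) ij(1)] .
    then have "xs \<noteq> []" by auto
    with xs show ?thesis by (intro gdist_le_walk[OF walk_rev[OF xs(1)]]) (auto simp: hd_rev last_rev)
  qed
  with assms show ?thesis by (simp add: le_antisym)
qed

lemma gdist_le_diameter:
  assumes "i < N" "j < N"
  shows "gdist N E i j \<le> diameter N E"
proof -
  have "{gdist N E i j | i j. i < N \<and> j < N} = (\<lambda>(i,j). gdist N E i j) ` ({..<N} \<times> {..<N})"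
    by auto
  then show ?thesis unfolding diameter_def using assms by (intro Max_ge) auto
qed

lemma diameter_pos: "2 \<le> N \<Longrightarrow> 1 \<le> diameter N E"
  using gdist_le_diameter[of 0 1] gdist_eq_0_iff[of 0 1] by auto

lemma laplacian_symmetric: "transpose_mat (laplacian N E) = laplacian N E"
  unfolding laplacian_def by (intro eq_matI) (auto simp: edge_sym)

lemma path_laplacian_1: "path_laplacian N E 1 = laplacian N E"
proof -
  have "{k. k < N \<and> gdist N E i k = 1} = {k. k < N \<and> E i k}" if "i < N" for i
    using gdist_eq_1_iff[OF that] by blast
  then show ?thesis
    unfolding path_laplacian_def laplacian_def degree_def
    by (auto intro!: eq_matI simp: gdist_eq_1_iff[simplified])
qed

lemma sum_path_laplacians_index:
  assumes i: "i < N" and j: "j < N"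
  shows "(\<Sum>d = 1..diameter N E. path_laplacian N E d $$ (i,j)) = complete_laplacian N $$ (i,j)"
proof (cases "i = j")
  case False
  then have "gdist N E i j \<in> {1..diameter N E}"
    using gdist_le_diameter[OF i j] gdist_eq_0_iff[OF i j] by auto
  then show ?thesis
    using i j False by (simp add: path_laplacian_def complete_laplacian_def sum.delta)
next
  case True
  \<comment> \<open>each vertex other than \<open>i\<close> is counted at exactly one distance in \<open>1..diameter\<close>\<close>
  define S where "S = {..<N} - {i}"
  have "gdist N E i ` S \<subseteq> {1..diameter N E}"
    using gdist_le_diameter[OF i] gdist_eq_0_iff[OF i] unfolding S_def by (auto simp: Suc_le_eq)
  then have "card S = (\<Sum>d = 1..diameter N E. card {k \<in> S. gdist N E i k = d})"
    using sum.group[of S "{1..diameter N E}" "gdist N E i" "\<lambda>_. 1::nat"] by (simp add: S_def)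
  also have "\<dots> = (\<Sum>d = 1..diameter N E. card {k. k < N \<and> gdist N E i k = d})"
    using gdist_eq_0_iff[OF i i] unfolding S_def by (intro sum.cong refl arg_cong[where f = card]) auto
  finally have "(\<Sum>d = 1..diameter N E. real (card {k. k < N \<and> gdist N E i k = d})) = real N - 1"
    using i unfolding S_def by (simp flip: of_nat_sum)
  then show ?thesis using True i by (simp add: path_laplacian_def complete_laplacian_def)
qed

lemma mellin_laplacian_symmetric:
  "transpose_mat (mellin_laplacian N E s) = mellin_laplacian N E s"
  unfolding mellin_laplacian_def path_laplacian_def
  by (intro eq_matI) (auto intro!: sum.cong simp: gdist_sym)

lemma laplace_laplacian_symmetric:
  "transpose_mat (laplace_laplacian N E l) = laplace_laplacian N E l"
  unfolding laplace_laplacian_def path_laplacian_def laplacian_def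
  by (intro eq_matI) (auto intro!: sum.cong simp: gdist_sym edge_sym)

lemma mellin_laplacian_index_tendsto_at_top:
  assumes N: "2 \<le> N" and ij: "i < N" "j < N"
  shows "((\<lambda>s. mellin_laplacian N E s $$ (i,j)) \<longlongrightarrow> laplacian N E $$ (i,j)) at_top"
proof -
  have "((\<lambda>s. real d powr - s) \<longlongrightarrow> (if d = 1 then 1 else 0)) at_top" if "d \<in> {1..diameter N E}" for d
  proof (cases "d = 1")
    case False
    with that have "real d > 1" by auto
    with False show ?thesis by simp real_asymp
  qed simp
  then have "((\<lambda>s. \<Sum>d = 1..diameter N E. real d powr - s * path_laplacian N E d $$ (i,j)) \<longlongrightarrow>
      (\<Sum>d = 1..diameter N E. (if d = 1 then 1 else 0) * path_laplacian N E d $$ (i,j))) at_top"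
    by (intro tendsto_sum tendsto_mult_right)
  also have "(\<Sum>d = 1..diameter N E. (if d = 1 then 1 else 0) * path_laplacian N E d $$ (i,j)) =
      laplacian N E $$ (i,j)"
    using diameter_pos[OF N] path_laplacian_1
    by (simp add: if_distrib[of "\<lambda>c. c * _"] sum.delta cong: if_cong)
  finally show ?thesis using ij by (simp add: mellin_laplacian_def)
qed

lemma mellin_laplacian_index_tendsto_0:
  assumes ij: "i < N" "j < N"
  shows "((\<lambda>s. mellin_laplacian N E s $$ (i,j)) \<longlongrightarrow> complete_laplacian N $$ (i,j)) (at_right 0)"
proof -
  have "((\<lambda>s. real d powr - s) \<longlongrightarrow> real d powr - 0) (at_right 0)" if "d \<in> {1..diameter N E}" for d
    using that by (intro tendsto_intros) auto
  then have "((\<lambda>s. \<Sum>d = 1..diameter N E. real d powr - s * path_laplacian N E d $$ (i,j)) \<longlongrightarrow>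
      (\<Sum>d = 1..diameter N E. real d powr - 0 * path_laplacian N E d $$ (i,j))) (at_right 0)"
    by (intro tendsto_sum tendsto_mult_right)
  then show ?thesis using ij sum_path_laplacians_index[OF ij] by (simp add: mellin_laplacian_def)
qed

lemma laplace_laplacian_index_tendsto_at_top:
  assumes ij: "i < N" "j < N"
  shows "((\<lambda>l. laplace_laplacian N E l $$ (i,j)) \<longlongrightarrow> laplacian N E $$ (i,j)) at_top"
proof -
  have "((\<lambda>l. exp (- l * real d)) \<longlongrightarrow> 0) at_top" if "d \<in> {2..diameter N E}" for d
  proof -
    from that have "real d > 0" by auto
    then show ?thesis by real_asymp
  qed
  then have "((\<lambda>l. laplacian N E $$ (i,j) + (\<Sum>d = 2..diameter N E. exp (- l * real d) * path_laplacian N E d $$ (i,j)))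
      \<longlongrightarrow> laplacian N E $$ (i,j) + (\<Sum>d = 2..diameter N E. 0 * path_laplacian N E d $$ (i,j))) at_top"
    by (intro tendsto_add tendsto_const tendsto_sum tendsto_mult_right)
  then show ?thesis using ij by (simp add: laplace_laplacian_def)
qed

lemma laplace_laplacian_index_tendsto_0:
  assumes N: "2 \<le> N" and ij: "i < N" "j < N"
  shows "((\<lambda>l. laplace_laplacian N E l $$ (i,j)) \<longlongrightarrow> complete_laplacian N $$ (i,j)) (at_right 0)"
proof -
  have "((\<lambda>l. laplacian N E $$ (i,j) + (\<Sum>d = 2..diameter N E. exp (- l * real d) * path_laplacian N E d $$ (i,j)))
      \<longlongrightarrow> laplacian N E $$ (i,j) + (\<Sum>d = 2..diameter N E. exp (- 0 * real d) * path_laplacian N E d $$ (i,j)))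
      (at_right 0)"
    by (intro tendsto_intros)
  also have "laplacian N E $$ (i,j) + (\<Sum>d = 2..diameter N E. exp (- 0 * real d) * path_laplacian N E d $$ (i,j)) =
      (\<Sum>d = 1..diameter N E. path_laplacian N E d $$ (i,j))"
    using diameter_pos[OF N] path_laplacian_1 by (simp add: sum.atLeast_Suc_atMost numeral_2_eq_2)
  also have "\<dots> = complete_laplacian N $$ (i,j)" by (rule sum_path_laplacians_index[OF ij])
  finally show ?thesis using ij by (simp add: laplace_laplacian_def)
qed

lemma eig2_mellin_laplacian_tendsto_at_top:
  assumes N: "2 \<le> N"
  shows "((\<lambda>s. eig 2 (mellin_laplacian N E s)) \<longlongrightarrow> eig 2 (laplacian N E)) at_top"
  by (rule tendsto_eig2[OF N mellin_laplacian_carrier mellin_laplacian_symmetric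
        laplacian_carrier laplacian_symmetric mellin_laplacian_index_tendsto_at_top[OF N]])

lemma eig2_mellin_laplacian_tendsto_0:
  assumes N: "2 \<le> N"
  shows "((\<lambda>s. eig 2 (mellin_laplacian N E s)) \<longlongrightarrow> eig 2 (complete_laplacian N)) (at_right 0)"
  by (rule tendsto_eig2[OF N mellin_laplacian_carrier mellin_laplacian_symmetric
        complete_laplacian_carrier complete_laplacian_symmetric mellin_laplacian_index_tendsto_0])

lemma eig2_laplace_laplacian_tendsto_at_top:
  assumes N: "2 \<le> N"
  shows "((\<lambda>l. eig 2 (laplace_laplacian N E l)) \<longlongrightarrow> eig 2 (laplacian N E)) at_top"
  by (rule tendsto_eig2[OF N laplace_laplacian_carrier laplace_laplacian_symmetric
        laplacian_carrier laplacian_symmetric laplace_laplacian_index_tendsto_at_top])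

lemma eig2_laplace_laplacian_tendsto_0:
  assumes N: "2 \<le> N"
  shows "((\<lambda>l. eig 2 (laplace_laplacian N E l)) \<longlongrightarrow> eig 2 (complete_laplacian N)) (at_right 0)"
  by (rule tendsto_eig2[OF N laplace_laplacian_carrier laplace_laplacian_symmetric
        complete_laplacian_carrier complete_laplacian_symmetric laplace_laplacian_index_tendsto_0[OF N]])

end

theorem lemma2:
  fixes N :: nat and E :: "nat \<Rightarrow> nat \<Rightarrow> bool"
  assumes "N \<ge> 2" and "simple_graph N E" and "connected_graph N E"
  shows "((\<lambda>s. eig 2 (mellin_laplacian N E s) / real N) \<longlongrightarrow> eig 2 (laplacian N E) / real N) at_top \<and>
     ((\<lambda>s. eig 2 (mellin_laplacian N E s) / real N) \<longlongrightarrow> 1) (at_right 0) \<and>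
     ((\<lambda>l. eig 2 (laplace_laplacian N E l) / real N) \<longlongrightarrow> eig 2 (laplacian N E) / real N) at_top \<and>
     ((\<lambda>l. eig 2 (laplace_laplacian N E l) / real N) \<longlongrightarrow> 1) (at_right 0)"
proof -
  interpret connected_simple_graph N E using assms(2,3) by unfold_locales
  have N: "real N \<noteq> 0" using assms(1) by simp
  have K: "eig 2 (complete_laplacian N) / real N = 1"
    using eig2_complete_laplacian[OF assms(1)] N by simp
  have div: "((\<lambda>x. f x / real N) \<longlongrightarrow> a / real N) F" if "(f \<longlongrightarrow> a) F" for f :: "real \<Rightarrow> real" and a F
    using that N by (intro tendsto_divide tendsto_const)
  show ?thesis
    using div[OF eig2_mellin_laplacian_tendsto_at_top[OF assms(1)]]
      div[OF eig2_mellin_laplacian_tendsto_0[OF assms(1)], unfolded K]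
      div[OF eig2_laplace_laplacian_tendsto_at_top[OF assms(1)]]
      div[OF eig2_laplace_laplacian_tendsto_0[OF assms(1)], unfolded K]
    by blast
qed

end
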